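(* Let $\mathsf{P}:\mathcal{B}(\mathbb{C})\to\mathcal{L}(\mathcal{H})$ be a phase shift covariant phase space observable whose angle margin is the canonical phase, i.e.\ $\mathsf{P}(\mathbb{R}_+\times\Theta)=\mathsf{E}_{\mathrm{can}}(\Theta)$ for all $\Theta\in\mathcal{B}([0,2\pi))$. Then its radial margin is trivial: there is a probability measure $\nu$ on $\mathbb{R}_+$ with $\mathsf{P}(X\times[0,2\pi))=\nu(X)I$ for all $X\in\mathcal{B}(\mathbb{R}_+)$.
   Context: $\mathcal{H}\simeq L^2(\mathbb{R})$ with number basis $\{|n\rangle\}$ and number operator $N$. $\mathbb{C}\simeq\mathbb{R}_+\times[0,2\pi)$ via polar coordinates, $X\times\Theta=\{re^{i\theta}:r\in X,\theta\in\Theta\}$; $\dot{+}$ is addition modulo $2\pi$. A phase shift covariant phase space observable is a POVM $\mathsf{P}$ on $\mathcal{B}(\mathbb{C})$ with $e^{i\theta N}\mathsf{P}(X\times\Theta)e^{-i\theta N}=\mathsf{P}(X\times(\Theta\dot{+}\theta))$ for all $X,\Theta,\theta$. The canonical phase is $\mathsf{E}_{\mathrm{can}}(\Theta)=\sum_{m,n=0}^\infty\frac{1}{2\pi}\int_\Theta e^{i(m-n)\theta}d\theta\,|m\rangle\langle n|$. *)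

theory Defs
  imports "HOL-Probability.Probability"
begin

text \<open>Operators on H = L2(R) are represented by their matrix elements
  in the number basis: an operator T is given by (\<lambda>m n. <m|T|n>).
  A POVM on the Borel sets of C is thus a map P :: complex set => nat => nat => complex,
  P A m n = <m|P(A)|n>.\<close>

definition mod2pi :: "real \<Rightarrow> real" where
  "mod2pi t = t - 2 * pi * of_int \<lfloor>t / (2 * pi)\<rfloor>"

definition shift2pi :: "real set \<Rightarrow> real \<Rightarrow> real set" where
  "shift2pi \<Theta> \<theta> = (\<lambda>t. mod2pi (t + \<theta>)) ` \<Theta>"

definition polar_set :: "real set \<Rightarrow> real set \<Rightarrow> complex set" where
  "polar_set X \<Theta> = {complex_of_real r * cis t | r t. r \<in> X \<and> t \<in> \<Theta>}"

text \<open>P is a POVM on B(C): each P(A) (A Borel) is a positive operator (its quadratic form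
  on finitely supported vectors is real and nonnegative), P(C) = I, and P is
  weakly sigma-additive. (Positivity together with normalization forces 0 <= P(A) <= I,
  so each P(A) is a bounded operator determined by these matrix elements.)\<close>
definition is_povm :: "(complex set \<Rightarrow> nat \<Rightarrow> nat \<Rightarrow> complex) \<Rightarrow> bool" where
  "is_povm P \<longleftrightarrow>
     (\<forall>A \<in> sets borel. \<forall>c :: nat \<Rightarrow> complex. \<forall>S. finite S \<longrightarrow>
        Im (\<Sum>i\<in>S. \<Sum>j\<in>S. cnj (c i) * c j * P A i j) = 0 \<and>
        Re (\<Sum>i\<in>S. \<Sum>j\<in>S. cnj (c i) * c j * P A i j) \<ge> 0)
   \<and> (\<forall>m n. P UNIV m n = (if m = n then 1 else 0))
   \<and> (\<forall>A :: nat \<Rightarrow> complex set. range A \<subseteq> sets borel \<longrightarrow> disjoint_family A \<longrightarrow>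
        (\<forall>m n. (\<lambda>k. P (A k) m n) sums P (\<Union>k. A k) m n))"

text \<open>Phase shift covariance: e^{i theta N} P(X x Theta) e^{-i theta N} = P(X x (Theta +. theta)),
  in matrix elements: e^{i(m-n)theta} <m|P(X x Theta)|n> = <m|P(X x (Theta +. theta))|n>.\<close>
definition phase_covariant :: "(complex set \<Rightarrow> nat \<Rightarrow> nat \<Rightarrow> complex) \<Rightarrow> bool" where
  "phase_covariant P \<longleftrightarrow>
     (\<forall>X \<Theta> \<theta>. X \<in> sets borel \<longrightarrow> X \<subseteq> {0..} \<longrightarrow> \<Theta> \<in> sets borel \<longrightarrow> \<Theta> \<subseteq> {0..<2*pi} \<longrightarrow>
        (\<forall>m n. cis ((real m - real n) * \<theta>) * P (polar_set X \<Theta>) m n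
               = P (polar_set X (shift2pi \<Theta> \<theta>)) m n))"

definition E_can :: "real set \<Rightarrow> nat \<Rightarrow> nat \<Rightarrow> complex" where
  "E_can \<Theta> m n = (1 / (2 * pi)) * (LINT t:\<Theta>|lborel. cis ((real m - real n) * t))"

end

theory Submission
  imports Defs
begin

text \<open>Covariance kills the off-diagonal entries of the radial margin P(X \<times> [0, 2 pi)):
  a rotation by pi / (m - n) flips their sign but fixes the full angle range. For the diagonal,
  cut [0, 2 pi) into N arcs of length \<epsilon> = 2 pi / N. By covariance each sector over X carries
  1/N of the diagonal of the radial margin. On the first arc the sector operators over X and over
  the complementary radii are positive and add up to the canonical phase, whose (m, n) entry
  differs from the diagonal one only by the factor sin x / x, x = (m - n) \<epsilon>, i.e. it is nearly
  a rank-one projection. Positivity of both summands then bounds the gap between the m-th and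
  n-th diagonal entries by O(1/N), so the diagonal is constant; it defines the measure \<nu>.\<close>

lemma mod2pi_eq_self: "0 \<le> t \<Longrightarrow> t < 2*pi \<Longrightarrow> mod2pi t = t"
  by (simp add: mod2pi_def floor_eq_iff)

lemma mod2pi_bounds: "0 \<le> mod2pi t \<and> mod2pi t < 2*pi"
proof -
  have p: "2*pi > 0" using pi_gt_zero by simp
  have "of_int \<lfloor>t / (2*pi)\<rfloor> * (2*pi) \<le> t" "t < (of_int \<lfloor>t / (2*pi)\<rfloor> + 1) * (2*pi)"
    using floor_divide_lower[OF p] floor_divide_upper[OF p] by auto
  then show ?thesis unfolding mod2pi_def by (auto simp: algebra_simps)
qed

lemma mod2pi_add_multiple: "mod2pi (t + 2*pi * of_int j) = mod2pi t"
proof -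
  have "(t + 2*pi * of_int j) / (2*pi) = t / (2*pi) + of_int j"
    by (simp add: field_simps)
  then show ?thesis unfolding mod2pi_def by (simp add: algebra_simps)
qed

lemma shift2pi_full_circle: "shift2pi {0..<2*pi} \<theta> = {0..<2*pi}"
proof
  show "shift2pi {0..<2*pi} \<theta> \<subseteq> {0..<2*pi}"
    unfolding shift2pi_def using mod2pi_bounds by auto
  show "{0..<2*pi} \<subseteq> shift2pi {0..<2*pi} \<theta>"
  proof
    fix s :: real assume s: "s \<in> {0..<2*pi}"
    define t where "t = mod2pi (s - \<theta>)"
    have "t + \<theta> = s + 2*pi * of_int (- \<lfloor>(s - \<theta>) / (2*pi)\<rfloor>)"
      unfolding t_def mod2pi_def by simp
    then have "mod2pi (t + \<theta>) = mod2pi s"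
      using mod2pi_add_multiple[of s "- \<lfloor>(s - \<theta>) / (2*pi)\<rfloor>"] by simp
    then have "mod2pi (t + \<theta>) = s" using mod2pi_eq_self s by simp
    moreover have "t \<in> {0..<2*pi}" using mod2pi_bounds t_def by auto
    ultimately show "s \<in> shift2pi {0..<2*pi} \<theta>" unfolding shift2pi_def by force
  qed
qed

lemma shift2pi_atLeastLessThan:
  assumes "0 \<le> a" "0 \<le> \<theta>" "b + \<theta> \<le> 2*pi"
  shows "shift2pi {a..<b} \<theta> = {a+\<theta>..<b+\<theta>}"
proof -
  have "shift2pi {a..<b} \<theta> = (\<lambda>t. t + \<theta>) ` {a..<b}"
    unfolding shift2pi_def by (rule image_cong) (use assms mod2pi_eq_self in auto)
  then show ?thesis by simp
qed

lemma polar_set_UN_radii: "polar_set (\<Union>i\<in>I. X i) \<Theta> = (\<Union>i\<in>I. polar_set (X i) \<Theta>)"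
  by (auto simp: polar_set_def)

lemma polar_set_UN_angles: "polar_set X (\<Union>i\<in>I. \<Theta> i) = (\<Union>i\<in>I. polar_set X (\<Theta> i))"
  by (auto simp: polar_set_def)

lemma polar_set_Un_radii: "polar_set (X \<union> Y) \<Theta> = polar_set X \<Theta> \<union> polar_set Y \<Theta>"
  by (auto simp: polar_set_def)

lemma norm_polar: "0 \<le> r \<Longrightarrow> cmod (complex_of_real r * cis t) = r"
  by (simp add: norm_mult)

lemma polar_set_disjoint_radii:
  assumes "X \<subseteq> {0..}" "Y \<subseteq> {0..}" "X \<inter> Y = {}"
  shows "polar_set X \<Theta> \<inter> polar_set Y \<Theta>' = {}"
proof -
  have "cmod z \<in> X" if "z \<in> polar_set X \<Theta>" for z
    using that assms(1) norm_polar unfolding polar_set_def by auto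
  moreover have "cmod z \<in> Y" if "z \<in> polar_set Y \<Theta>'" for z
    using that assms(2) norm_polar unfolding polar_set_def by auto
  ultimately show ?thesis using assms(3) by blast
qed

lemma Arg2pi_cis: "t \<in> {0..<2*pi} \<Longrightarrow> Arg2pi (cis t) = t"
  using Arg2pi_exp[of "\<i> * complex_of_real t"] by (simp add: cis_conv_exp)

lemma polar_set_disjoint_angles:
  assumes "X \<subseteq> {0<..}" "\<Theta> \<subseteq> {0..<2*pi}" "\<Theta>' \<subseteq> {0..<2*pi}" "\<Theta> \<inter> \<Theta>' = {}"
  shows "polar_set X \<Theta> \<inter> polar_set X \<Theta>' = {}"
proof -
  have "Arg2pi z \<in> \<Theta>" if "z \<in> polar_set X \<Theta>" for z
    using that assms(1,2) Arg2pi_cis unfolding polar_set_def by (auto simp: subset_iff)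
  moreover have "Arg2pi z \<in> \<Theta>'" if "z \<in> polar_set X \<Theta>'" for z
    using that assms(1,3) Arg2pi_cis unfolding polar_set_def by (auto simp: subset_iff)
  ultimately show ?thesis using assms(4) by blast
qed

lemma polar_set_eq:
  assumes "X \<subseteq> {0..}" "\<Theta> \<subseteq> {0..<2*pi}" "\<Theta> \<noteq> {}"
  shows "polar_set X \<Theta> = {z. cmod z \<in> X \<and> (z = 0 \<or> Arg2pi z \<in> \<Theta>)}"
proof (intro set_eqI iffI)
  fix z assume "z \<in> polar_set X \<Theta>"
  then obtain r t where z: "z = complex_of_real r * cis t" "r \<in> X" "t \<in> \<Theta>"
    unfolding polar_set_def by auto
  have "r \<ge> 0" using z assms by auto
  then show "z \<in> {z. cmod z \<in> X \<and> (z = 0 \<or> Arg2pi z \<in> \<Theta>)}"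
    using z assms Arg2pi_cis[of t] by (cases "r = 0") (auto simp: norm_polar)
next
  fix z assume z: "z \<in> {z. cmod z \<in> X \<and> (z = 0 \<or> Arg2pi z \<in> \<Theta>)}"
  show "z \<in> polar_set X \<Theta>"
  proof (cases "z = 0")
    case True
    then obtain t where "t \<in> \<Theta>" using assms by auto
    then show ?thesis using z True unfolding polar_set_def by force
  next
    case False
    have "z = complex_of_real (cmod z) * cis (Arg2pi z)"
      using cos_Arg2pi[of z] sin_Arg2pi[of z] by (intro complex_eqI) auto
    then show ?thesis using z False unfolding polar_set_def by blast
  qed
qed

lemma polar_set_full_plane: "polar_set {0..} {0..<2*pi} = UNIV"
  using polar_set_eq[of "{0..}" "{0..<2*pi}"] Arg2pi pi_gt_zero by auto

lemma Arg2pi_borel_measurable: "Arg2pi \<in> borel_measurable borel"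
  unfolding borel_measurable_iff_le using closed_Arg2pi2pi_le by auto

lemma polar_set_borel:
  assumes "X \<in> sets borel" "X \<subseteq> {0..}" "\<Theta> \<in> sets borel" "\<Theta> \<subseteq> {0..<2*pi}"
  shows "polar_set X \<Theta> \<in> sets borel"
proof (cases "\<Theta> = {}")
  case True
  then show ?thesis by (simp add: polar_set_def)
next
  case False
  have "polar_set X \<Theta> = (cmod -` X) \<inter> ({0} \<union> Arg2pi -` \<Theta>)"
    using polar_set_eq[OF assms(2,4) False] by auto
  moreover have "cmod -` X \<in> sets borel"
    using measurable_sets_borel[OF borel_measurable_norm assms(1)] by simp
  moreover have "Arg2pi -` \<Theta> \<in> sets borel"
    using measurable_sets_borel[OF Arg2pi_borel_measurable assms(3)] by simp
  ultimately show ?thesis by auto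
qed

lemma povm_sums:
  "is_povm P \<Longrightarrow> range A \<subseteq> sets borel \<Longrightarrow> disjoint_family A \<Longrightarrow>
    (\<lambda>k. P (A k) m n) sums P (\<Union>k. A k) m n"
  unfolding is_povm_def by blast

lemma povm_UNIV: "is_povm P \<Longrightarrow> P UNIV m n = (if m = n then 1 else 0)"
  unfolding is_povm_def by blast

lemma povm_empty:
  assumes "is_povm P"
  shows "P {} m n = 0"
proof -
  have "(\<lambda>_. P {} m n) sums P {} m n"
    using povm_sums[OF assms, of "\<lambda>_. {}"] by (auto simp: disjoint_family_on_def)
  then show ?thesis by (simp add: sums_iff summable_const_iff)
qed

lemma povm_finite_UN:
  fixes N :: nat
  assumes "is_povm P" "\<And>j. j < N \<Longrightarrow> A j \<in> sets borel" "disjoint_family_on A {..<N}"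
  shows "P (\<Union>j<N. A j) m n = (\<Sum>j<N. P (A j) m n)"
proof -
  define B where "B k = (if k < N then A k else {})" for k
  have "(\<lambda>k. P (B k) m n) sums P (\<Union>k. B k) m n"
    by (rule povm_sums[OF assms(1)]) (use assms in \<open>auto simp: B_def disjoint_family_on_def\<close>)
  moreover have "(\<lambda>k. P (B k) m n) sums (\<Sum>k<N. P (B k) m n)"
    by (rule sums_finite) (auto simp: B_def povm_empty[OF assms(1)])
  moreover have "(\<Union>k. B k) = (\<Union>j<N. A j)" by (auto simp: B_def split: if_splits)
  ultimately show ?thesis by (simp add: sums_unique2 B_def)
qed

lemma povm_Un:
  assumes "is_povm P" "A \<in> sets borel" "B \<in> sets borel" "A \<inter> B = {}"
  shows "P (A \<union> B) m n = P A m n + P B m n"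
proof -
  have "(\<lambda>k. P (binaryset A B k) m n) sums P (\<Union>k. binaryset A B k) m n"
    by (rule povm_sums[OF assms(1)])
      (use assms in \<open>auto simp: disjoint_family_on_def binaryset_def range_binaryset_eq\<close>)
  moreover have "(\<lambda>k. P (binaryset A B k) m n) sums (P A m n + P B m n)"
    using binaryset_sums[of "\<lambda>X. P X m n"] povm_empty[OF assms(1)] by auto
  ultimately show ?thesis by (simp add: UN_binaryset_eq sums_unique2)
qed

lemma povm_quadratic_form:
  assumes "is_povm P" "A \<in> sets borel" "finite S"
  shows "Im (\<Sum>i\<in>S. \<Sum>j\<in>S. cnj (c i) * c j * P A i j) = 0 \<and>
    Re (\<Sum>i\<in>S. \<Sum>j\<in>S. cnj (c i) * c j * P A i j) \<ge> 0"
  using assms unfolding is_povm_def by blast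

lemma povm_diag_real_nonneg:
  assumes "is_povm P" "A \<in> sets borel"
  shows "P A m m = complex_of_real (Re (P A m m))" "Re (P A m m) \<ge> 0"
  using povm_quadratic_form[OF assms, of "{m}" "\<lambda>_. 1"] by (auto intro: complex_eqI)

lemma povm_two_level_nonneg:
  assumes "is_povm P" "A \<in> sets borel" "m \<noteq> n"
  shows "0 \<le> u\<^sup>2 * Re (P A m m) + u * v * Re (P A m n + P A n m) + v\<^sup>2 * Re (P A n n)"
proof -
  define c where "c i = (if i = m then complex_of_real u else if i = n then complex_of_real v else 0)" for i
  have "Re (\<Sum>i\<in>{m,n}. \<Sum>j\<in>{m,n}. cnj (c i) * c j * P A i j) \<ge> 0"
    using povm_quadratic_form[OF assms(1,2), of "{m,n}" c] by simp
  then show ?thesis using assms(3) by (simp add: c_def power2_eq_square algebra_simps)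
qed

lemma povm_polar_Un_radii:
  assumes "is_povm P" "X \<in> sets borel" "X \<subseteq> {0..}" "Y \<in> sets borel" "Y \<subseteq> {0..}" "X \<inter> Y = {}"
    "\<Theta> \<in> sets borel" "\<Theta> \<subseteq> {0..<2*pi}"
  shows "P (polar_set (X \<union> Y) \<Theta>) m n = P (polar_set X \<Theta>) m n + P (polar_set Y \<Theta>) m n"
  unfolding polar_set_Un_radii
  using povm_Un[OF assms(1) polar_set_borel[OF assms(2,3,7,8)] polar_set_borel[OF assms(4,5,7,8)]
      polar_set_disjoint_radii[OF assms(3,5,6)]] .

lemma phase_covariantD:
  "phase_covariant P \<Longrightarrow> X \<in> sets borel \<Longrightarrow> X \<subseteq> {0..} \<Longrightarrow> \<Theta> \<in> sets borel \<Longrightarrow> \<Theta> \<subseteq> {0..<2*pi} \<Longrightarrow>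
    cis ((real m - real n) * \<theta>) * P (polar_set X \<Theta>) m n = P (polar_set X (shift2pi \<Theta> \<theta>)) m n"
  unfolding phase_covariant_def by blast

lemma phase_covariant_offdiag_zero:
  assumes cov: "phase_covariant P" and X: "X \<in> sets borel" "X \<subseteq> {0..}" and mn: "m \<noteq> n"
  shows "P (polar_set X {0..<2*pi}) m n = 0"
proof -
  define k where "k = real m - real n"
  have k: "k \<noteq> 0" using mn by (simp add: k_def)
  have "cis (k * (pi / k)) * P (polar_set X {0..<2*pi}) m n = P (polar_set X {0..<2*pi}) m n"
    using phase_covariantD[OF cov X, of "{0..<2*pi}" m n "pi / k"]
    by (simp only: shift2pi_full_circle k_def) simp
  then show ?thesis using k by simp
qed

lemma cos_ge_one_minus_sq_half:
  fixes x :: real assumes "x \<ge> 0"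
  shows "cos x \<ge> 1 - x\<^sup>2 / 2"
proof -
  let ?f = "\<lambda>x. cos x - 1 + x\<^sup>2 / 2"
  have "(?f has_real_derivative (u - sin u)) (at u)" for u :: real
    by (auto intro!: derivative_eq_intros simp: power2_eq_square)
  moreover have "u - sin u \<ge> 0" if "0 \<le> u" for u :: real
    using sin_x_le_x[OF that] by simp
  ultimately have "?f x \<ge> ?f 0"
    by (intro DERIV_nonneg_imp_nondecreasing[OF assms]) blast
  then show ?thesis by simp
qed

lemma sin_ge_cubic:
  fixes x :: real assumes "x \<ge> 0"
  shows "sin x \<ge> x - x ^ 3 / 6"
proof -
  let ?f = "\<lambda>x. sin x - x + x ^ 3 / 6"
  have "(?f has_real_derivative (cos u - 1 + u\<^sup>2 / 2)) (at u)" for u :: real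
    by (auto intro!: derivative_eq_intros simp: power2_eq_square)
  moreover have "cos u - 1 + u\<^sup>2 / 2 \<ge> 0" if "0 \<le> u" for u :: real
    using cos_ge_one_minus_sq_half[OF that] by simp
  ultimately have "?f x \<ge> ?f 0"
    by (intro DERIV_nonneg_imp_nondecreasing[OF assms]) blast
  then show ?thesis by simp
qed

lemma sin_div_ge:
  fixes x :: real assumes "x \<noteq> 0"
  shows "sin x / x \<ge> 1 - x\<^sup>2 / 6"
proof -
  have "sin \<bar>x\<bar> / \<bar>x\<bar> \<ge> 1 - \<bar>x\<bar>\<^sup>2 / 6"
    using sin_ge_cubic[of "\<bar>x\<bar>"] assms by (simp add: field_simps power2_eq_square power3_eq_cube)
  moreover have "sin \<bar>x\<bar> / \<bar>x\<bar> = sin x / x" by (simp add: abs_if)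
  ultimately show ?thesis by simp
qed

lemma E_can_arc_diag:
  assumes "\<epsilon> > 0"
  shows "E_can {0..<\<epsilon>} m m = complex_of_real (\<epsilon> / (2*pi))"
proof -
  have "(LINT t:{0..<\<epsilon>}|lborel. cis ((real m - real m) * t)) = complex_of_real \<epsilon>"
    using assms by (simp add: set_integral_const scaleR_conv_of_real)
  then show ?thesis unfolding E_can_def by simp
qed

lemma integral_cos_Ico:
  fixes \<epsilon> k :: real assumes "\<epsilon> > 0" "k \<noteq> 0"
  shows "(LINT t:{0..<\<epsilon>}|lborel. cos (k * t)) = sin (k * \<epsilon>) / k"
proof -
  have "(LINT t:{0..<\<epsilon>}|lborel. cos (k * t)) = (LBINT t=ereal 0..ereal \<epsilon>. cos (k * t))"
    using assms by (intro interval_integral_Ico[symmetric]) auto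
  also have "\<dots> = sin (k * \<epsilon>) / k - sin (k * 0) / k"
    using assms
    by (intro interval_integral_FTC_finite)
       (auto intro!: continuous_intros derivative_eq_intros
             simp: has_real_derivative_iff_has_vector_derivative[symmetric] has_field_derivative_at_within)
  finally show ?thesis by simp
qed

lemma E_can_arc_offdiag:
  assumes "\<epsilon> > 0" "m \<noteq> n"
  defines "x \<equiv> (real m - real n) * \<epsilon>"
  shows "Re (E_can {0..<\<epsilon>} m n + E_can {0..<\<epsilon>} n m) = 2 * (\<epsilon> / (2*pi)) * (sin x / x)"
proof -
  define k where "k = real m - real n"
  have k: "k \<noteq> 0" using assms k_def by auto
  have int: "set_integrable lborel {0..<\<epsilon>} (\<lambda>t. cis (c * t))" for c
    by (rule set_integrable_subset[OF borel_integrable_atLeastAtMost'[of 0 \<epsilon>]])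
      (auto intro!: continuous_intros)
  have "E_can {0..<\<epsilon>} m n + E_can {0..<\<epsilon>} n m
     = (1 / (2*pi)) * ((LINT t:{0..<\<epsilon>}|lborel. cis (k * t)) + (LINT t:{0..<\<epsilon>}|lborel. cis ((- k) * t)))"
    unfolding E_can_def k_def by (simp add: algebra_simps)
  also have "\<dots> = (1 / (2*pi)) * (LINT t:{0..<\<epsilon>}|lborel. cis (k * t) + cis ((- k) * t))"
    using set_integral_add(2)[OF int[of k] int[of "-k"]] by simp
  also have "(\<lambda>t. cis (k * t) + cis ((- k) * t)) = (\<lambda>t. complex_of_real (2 * cos (k * t)))"
    by (auto intro!: complex_eqI)
  also have "(LINT t:{0..<\<epsilon>}|lborel. complex_of_real (2 * cos (k * t))) = complex_of_real (2 * (sin (k * \<epsilon>) / k))"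
    using integral_cos_Ico[OF assms(1) k] by (simp add: set_integral_complex_of_real)
  finally have "Re (E_can {0..<\<epsilon>} m n + E_can {0..<\<epsilon>} n m) = sin (k * \<epsilon>) / (pi * k)"
    by simp
  then show ?thesis
    using assms(1) k unfolding x_def k_def[symmetric] by (simp add: field_simps)
qed

lemma atLeastLessThan_eq_UN_arcs:
  fixes \<epsilon> :: real assumes "\<epsilon> > 0"
  shows "{0..<real N * \<epsilon>} = (\<Union>j<N. {real j * \<epsilon>..<real (Suc j) * \<epsilon>})"
proof (induction N)
  case (Suc N)
  have "{0..<real (Suc N) * \<epsilon>} = {0..<real N * \<epsilon>} \<union> {real N * \<epsilon>..<real (Suc N) * \<epsilon>}"
    using assms by (intro ivl_disj_un_two(3)[symmetric]) (auto simp: algebra_simps)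
  then show ?case using Suc.IH by (simp add: lessThan_Suc Un_commute)
qed simp

lemma disjoint_family_arcs:
  fixes \<epsilon> :: real assumes "\<epsilon> > 0"
  shows "disjoint_family (\<lambda>j. {real j * \<epsilon>..<real (Suc j) * \<epsilon>})"
proof -
  have "{real j * \<epsilon>..<real (Suc j) * \<epsilon>} \<inter> {real k * \<epsilon>..<real (Suc k) * \<epsilon>} = {}" if "j < k" for j k
  proof -
    have "real (Suc j) * \<epsilon> \<le> real k * \<epsilon>" using that assms by (intro mult_right_mono) auto
    then show ?thesis by auto
  qed
  then show ?thesis unfolding disjoint_family_on_def
    by (metis inf_commute nat_neq_iff)
qed

text \<open>The sectors over X are disjoint only because X avoids the origin, which lies in
  every sector.\<close>
lemma povm_sector_diag:
  assumes povm: "is_povm P" and cov: "phase_covariant P"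
    and X: "X \<in> sets borel" "X \<subseteq> {0<..}" and N: "N > 0"
  shows "P (polar_set X {0..<2*pi}) i i = of_nat N * P (polar_set X {0..<2*pi / N}) i i"
proof -
  define \<epsilon> where "\<epsilon> = 2*pi / real N"
  have \<epsilon>: "\<epsilon> > 0" "real N * \<epsilon> = 2*pi" using N by (auto simp: \<epsilon>_def)
  define \<Theta> where "\<Theta> j = {real j * \<epsilon>..<real (Suc j) * \<epsilon>}" for j
  have X0: "X \<subseteq> {0..}" using X(2) by auto
  have arcs: "{0..<2*pi} = (\<Union>j<N. \<Theta> j)"
    using atLeastLessThan_eq_UN_arcs[OF \<epsilon>(1), of N] \<epsilon>(2) by (simp add: \<Theta>_def)
  have \<Theta>_sub: "\<Theta> j \<subseteq> {0..<2*pi}" if "j < N" for j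
    using arcs that by blast
  have \<Theta>_shift: "shift2pi (\<Theta> 0) (real j * \<epsilon>) = \<Theta> j" if "j < N" for j
  proof -
    have "real (Suc j) * \<epsilon> \<le> 2*pi"
      using that \<epsilon> by (metis Suc_leI mult_right_mono of_nat_le_iff less_imp_le)
    then show ?thesis using \<epsilon>(1) shift2pi_atLeastLessThan[of 0 "real j * \<epsilon>" \<epsilon>]
      by (simp add: \<Theta>_def algebra_simps)
  qed
  have "P (polar_set X {0..<2*pi}) i i = P (\<Union>j<N. polar_set X (\<Theta> j)) i i"
    by (simp add: arcs polar_set_UN_angles)
  also have "\<dots> = (\<Sum>j<N. P (polar_set X (\<Theta> j)) i i)"
  proof (rule povm_finite_UN[OF povm])
    show "polar_set X (\<Theta> j) \<in> sets borel" if "j < N" for j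
      using polar_set_borel[OF X(1) X0 _ \<Theta>_sub[OF that]] by (simp add: \<Theta>_def)
    show "disjoint_family_on (\<lambda>j. polar_set X (\<Theta> j)) {..<N}"
      using disjoint_family_arcs[OF \<epsilon>(1)] polar_set_disjoint_angles[OF X(2) \<Theta>_sub \<Theta>_sub]
      unfolding disjoint_family_on_def \<Theta>_def by auto
  qed
  also have "\<dots> = (\<Sum>j<N. P (polar_set X (\<Theta> 0)) i i)"
  proof (intro sum.cong refl)
    fix j assume "j \<in> {..<N}"
    then show "P (polar_set X (\<Theta> j)) i i = P (polar_set X (\<Theta> 0)) i i"
      using phase_covariantD[OF cov X(1) X0 _ \<Theta>_sub[OF N], of i i "real j * \<epsilon>"] \<Theta>_shift
      by (simp add: \<Theta>_def)
  qed
  finally show ?thesis by (simp add: \<Theta>_def \<epsilon>_def)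
qed

lemma sq_le_of_quadratic_bound:
  fixes d c :: real
  assumes "\<And>s t. 0 \<le> s \<Longrightarrow> 0 \<le> t \<Longrightarrow> (s\<^sup>2 - t\<^sup>2) * d \<le> (s - t)\<^sup>2 + s * t * c"
  shows "d\<^sup>2 \<le> c"
proof (cases "d \<ge> 0")
  case True
  have "((1 + d)\<^sup>2 - 1\<^sup>2) * d \<le> ((1 + d) - 1)\<^sup>2 + (1 + d) * 1 * c"
    using assms[of "1 + d" 1] True by simp
  then have "(1 + d) * d\<^sup>2 \<le> (1 + d) * c" by (simp add: power2_eq_square algebra_simps)
  then show ?thesis using True by (smt (verit) mult_le_cancel_left_pos)
next
  case False
  have "(1\<^sup>2 - (1 - d)\<^sup>2) * d \<le> (1 - (1 - d))\<^sup>2 + 1 * (1 - d) * c"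
    using assms[of 1 "1 - d"] False by simp
  then have "(1 - d) * d\<^sup>2 \<le> (1 - d) * c" by (simp add: power2_eq_square algebra_simps)
  then show ?thesis using False by (smt (verit) mult_le_cancel_left_pos)
qed

definition canonical_angle_margin :: "(complex set \<Rightarrow> nat \<Rightarrow> nat \<Rightarrow> complex) \<Rightarrow> bool" where
  "canonical_angle_margin P \<longleftrightarrow> (\<forall>\<Theta>. \<Theta> \<in> sets borel \<longrightarrow> \<Theta> \<subseteq> {0..<2*pi} \<longrightarrow>
     (\<forall>m n. P (polar_set {0..} \<Theta>) m n = E_can \<Theta> m n))"

text \<open>Test A = P(X \<times> [0, \<epsilon>)) with t e_m - s e_n and the complementary sector B with
  s e_m - t e_n; since A + B is the canonical phase on [0, \<epsilon>), adding the two inequalities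
  eliminates the off-diagonal entries of A.\<close>
lemma canonical_margin_diag_gap:
  assumes povm: "is_povm P" and cov: "phase_covariant P" and can: "canonical_angle_margin P"
    and X: "X \<in> sets borel" "X \<subseteq> {0<..}" and mn: "m \<noteq> n" and N: "N > 0"
  defines "D i \<equiv> Re (P (polar_set X {0..<2*pi}) i i)"
  shows "(D m - D n)\<^sup>2 \<le> (2*pi*(real m - real n) / real N)\<^sup>2 / 3"
proof -
  define \<epsilon> where "\<epsilon> = 2*pi / real N"
  define e where "e = \<epsilon> / (2*pi)"
  define x where "x = (real m - real n) * \<epsilon>"
  have \<epsilon>: "\<epsilon> > 0" "\<epsilon> \<le> 2*pi" using N by (auto simp: \<epsilon>_def field_simps)
  have e: "e > 0" "e * real N = 1" using N by (auto simp: e_def \<epsilon>_def)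
  have x: "x \<noteq> 0" using mn \<epsilon> by (simp add: x_def)
  have arc: "{0..<\<epsilon>} \<in> sets borel" "{0..<\<epsilon>} \<subseteq> {0..<2*pi}" using \<epsilon> by auto
  have X0: "X \<subseteq> {0..}" using X(2) by auto
  define Y where "Y = {0..} - X"
  have Y: "Y \<in> sets borel" "Y \<subseteq> {0..}" "X \<inter> Y = {}" "X \<union> Y = {0..}"
    using X X0 by (auto simp: Y_def)
  define A where "A = P (polar_set X {0..<\<epsilon>})"
  define B where "B = P (polar_set Y {0..<\<epsilon>})"
  have AB: "A i j + B i j = E_can {0..<\<epsilon>} i j" for i j
    using povm_polar_Un_radii[OF povm X(1) X0 Y(1,2,3) arc, of i j] can arc
    unfolding A_def B_def Y(4) canonical_angle_margin_def by simp
  have A_diag: "Re (A i i) = e * D i" for i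
    using povm_sector_diag[OF povm cov X N, of i] e(2)
    unfolding A_def D_def \<epsilon>_def by (simp add: field_simps)
  have B_diag: "Re (B i i) = e - Re (A i i)" for i
    using arg_cong[OF AB[of i i], of Re] E_can_arc_diag[OF \<epsilon>(1), of i] by (simp add: e_def)
  have B_off: "Re (B m n + B n m) = 2 * e * (sin x / x) - Re (A m n + A n m)"
    using arg_cong[OF AB[of m n], of Re] arg_cong[OF AB[of n m], of Re]
      E_can_arc_offdiag[OF \<epsilon>(1) mn] by (simp add: e_def x_def)
  have "(s\<^sup>2 - t\<^sup>2) * (D m - D n) \<le> (s - t)\<^sup>2 + s * t * (x\<^sup>2 / 3)" if st: "s \<ge> 0" "t \<ge> 0" for s t
  proof -
    have "0 \<le> t\<^sup>2 * Re (A m m) + t * (-s) * Re (A m n + A n m) + (-s)\<^sup>2 * Re (A n n)"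
      unfolding A_def by (rule povm_two_level_nonneg[OF povm polar_set_borel[OF X(1) X0 arc] mn])
    moreover have "0 \<le> s\<^sup>2 * Re (B m m) + s * (-t) * Re (B m n + B n m) + (-t)\<^sup>2 * Re (B n n)"
      unfolding B_def by (rule povm_two_level_nonneg[OF povm polar_set_borel[OF Y(1,2) arc] mn])
    ultimately have "e * ((s\<^sup>2 - t\<^sup>2) * (D m - D n)) \<le> e * (s\<^sup>2 + t\<^sup>2 - s * t * (2 * (sin x / x)))"
      unfolding B_diag B_off A_diag by (simp add: power2_eq_square algebra_simps)
    then have "(s\<^sup>2 - t\<^sup>2) * (D m - D n) \<le> s\<^sup>2 + t\<^sup>2 - s * t * (2 * (sin x / x))"
      using e(1) by simp
    also have "\<dots> \<le> s\<^sup>2 + t\<^sup>2 - s * t * (2 * (1 - x\<^sup>2 / 6))"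
      using sin_div_ge[OF x] st by (intro diff_left_mono mult_left_mono) auto
    also have "\<dots> = (s - t)\<^sup>2 + s * t * (x\<^sup>2 / 3)" by (simp add: power2_eq_square algebra_simps)
    finally show ?thesis .
  qed
  then have "(D m - D n)\<^sup>2 \<le> x\<^sup>2 / 3" by (rule sq_le_of_quadratic_bound)
  moreover have "x = 2*pi*(real m - real n) / real N" by (simp add: x_def \<epsilon>_def)
  ultimately show ?thesis by simp
qed

lemma povm_diag_eq_pos_radii:
  assumes povm: "is_povm P" and cov: "phase_covariant P" and can: "canonical_angle_margin P"
    and X: "X \<in> sets borel" "X \<subseteq> {0<..}"
  shows "P (polar_set X {0..<2*pi}) m m = P (polar_set X {0..<2*pi}) n n"
proof (cases "m = n")
  case False
  define D where "D i = Re (P (polar_set X {0..<2*pi}) i i)" for i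
  have lim: "(\<lambda>N. (2*pi*(real m - real n) / real N)\<^sup>2 / 3) \<longlonglongrightarrow> 0"
    using lim_const_over_n[of "2*pi*(real m - real n)"] by (auto intro!: tendsto_eq_intros)
  have "\<forall>N\<ge>1. (D m - D n)\<^sup>2 \<le> (2*pi*(real m - real n) / real N)\<^sup>2 / 3"
    using canonical_margin_diag_gap[OF povm cov can X False] unfolding D_def by simp
  then have "(D m - D n)\<^sup>2 \<le> 0" by (rule Lim_bounded2[OF lim])
  then have "D m = D n" by simp
  moreover have "X \<subseteq> {0..}" using X(2) by auto
  ultimately show ?thesis
    using povm_diag_real_nonneg(1)[OF povm polar_set_borel[OF X(1) _ atLeastLessThan_borel order_refl]]
    unfolding D_def by metis
qed simp

text \<open>Radii sets containing 0 are reduced to their complement: the two radial margins add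
  up to the identity.\<close>
lemma povm_diag_eq:
  assumes povm: "is_povm P" and cov: "phase_covariant P" and can: "canonical_angle_margin P"
    and X: "X \<in> sets borel" "X \<subseteq> {0..}"
  shows "P (polar_set X {0..<2*pi}) m m = P (polar_set X {0..<2*pi}) n n"
proof (cases "0 \<in> X")
  case False
  then have "X \<subseteq> {0<..}" using X(2) by (auto simp: less_le)
  then show ?thesis by (rule povm_diag_eq_pos_radii[OF povm cov can X(1)])
next
  case True
  define Y where "Y = {0::real..} - X"
  have Y: "Y \<in> sets borel" "Y \<subseteq> {0<..}" "Y \<subseteq> {0..}" "X \<inter> Y = {}" "X \<union> Y = {0..}"
    using X True by (auto simp: Y_def less_le)
  have "P (polar_set X {0..<2*pi}) i i + P (polar_set Y {0..<2*pi}) i i = 1" for i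
    using povm_polar_Un_radii[OF povm X Y(1,3,4), of "{0..<2*pi}" i i] povm_UNIV[OF povm, of i i]
    unfolding Y(5) polar_set_full_plane by simp
  moreover have "P (polar_set Y {0..<2*pi}) m m = P (polar_set Y {0..<2*pi}) n n"
    by (rule povm_diag_eq_pos_radii[OF povm cov can Y(1,2)])
  ultimately show ?thesis by (metis add_right_cancel add.commute)
qed

lemma povm_radial_sums:
  assumes povm: "is_povm P" and A: "range A \<subseteq> sets borel" "\<And>k. A k \<subseteq> {0..}" "disjoint_family A"
    and \<Theta>: "\<Theta> \<in> sets borel" "\<Theta> \<subseteq> {0..<2*pi}"
  shows "(\<lambda>k. P (polar_set (A k) \<Theta>) m n) sums P (polar_set (\<Union>k. A k) \<Theta>) m n"
  unfolding polar_set_UN_radii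
proof (rule povm_sums[OF povm])
  show "range (\<lambda>k. polar_set (A k) \<Theta>) \<subseteq> sets borel"
    using polar_set_borel A(1,2) \<Theta> by auto
  show "disjoint_family (\<lambda>k. polar_set (A k) \<Theta>)"
    unfolding disjoint_family_on_def
  proof (intro ballI impI)
    fix j k :: nat assume "j \<noteq> k"
    then show "polar_set (A j) \<Theta> \<inter> polar_set (A k) \<Theta> = {}"
      using A(2,3) by (intro polar_set_disjoint_radii) (auto simp: disjoint_family_on_def)
  qed
qed

lemma povm_radial_measure:
  assumes povm: "is_povm P"
  obtains \<nu> :: "real measure" where "prob_space \<nu>" "space \<nu> = {0..}"
    "sets \<nu> = sets (restrict_space borel {0..})"
    "\<And>X. X \<in> sets borel \<Longrightarrow> X \<subseteq> {0..} \<Longrightarrow> measure \<nu> X = Re (P (polar_set X {0..<2*pi}) 0 0)"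
proof -
  define M where "M = restrict_space borel {0::real..}"
  define f where "f X = Re (P (polar_set X {0..<2*pi}) 0 0)" for X
  have sets_M: "X \<in> sets M \<longleftrightarrow> X \<in> sets borel \<and> X \<subseteq> {0..}" for X
    unfolding M_def by (subst sets_restrict_space_iff) auto
  have f_nonneg: "f X \<ge> 0" if "X \<in> sets M" for X
    using povm_diag_real_nonneg(2)[OF povm polar_set_borel] that unfolding sets_M f_def by auto
  define \<nu> where "\<nu> = measure_of {0..} (sets M) (\<lambda>X. ennreal (f X))"
  have ca: "countably_additive (sets M) (\<lambda>X. ennreal (f X))"
    unfolding countably_additive_def
  proof (intro allI impI)
    fix A :: "nat \<Rightarrow> real set"
    assume A: "range A \<subseteq> sets M" "disjoint_family A" "\<Union> (range A) \<in> sets M"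
    have "(\<lambda>k. P (polar_set (A k) {0..<2*pi}) 0 0) sums P (polar_set (\<Union>k. A k) {0..<2*pi}) 0 0"
      using A(1,2) sets_M by (intro povm_radial_sums[OF povm]) auto
    then have "(\<lambda>k. f (A k)) sums f (\<Union> (range A))"
      unfolding f_def by (intro sums_Re)
    then show "(\<Sum>k. ennreal (f (A k))) = ennreal (f (\<Union> (range A)))"
      using f_nonneg A(1) by (subst suminf_ennreal2) (auto simp: sums_iff)
  qed
  have pos: "positive (sets M) (\<lambda>X. ennreal (f X))"
    by (simp add: positive_def f_def polar_set_def povm_empty[OF povm])
  have sa: "sigma_algebra {0..} (sets M)"
    using sets.sigma_algebra_axioms[of M] by (simp add: M_def space_restrict_space)
  have emeasure_\<nu>: "emeasure \<nu> X = ennreal (f X)" if "X \<in> sets M" for X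
    unfolding \<nu>_def by (rule emeasure_measure_of_sigma[OF sa pos ca that])
  have space_\<nu>: "space \<nu> = {0..}" and sets_\<nu>: "sets \<nu> = sets M"
    unfolding \<nu>_def using sigma_algebra.space_measure_of_eq[OF sa]
      sigma_algebra.sets_measure_of_eq[OF sa] by simp_all
  have "f {0..} = 1"
    using povm_UNIV[OF povm] by (simp add: f_def polar_set_full_plane)
  then have "prob_space \<nu>"
    using emeasure_\<nu>[of "{0..}"] sets_M by (intro prob_spaceI) (simp add: space_\<nu>)
  moreover have "measure \<nu> X = f X" if "X \<in> sets borel" "X \<subseteq> {0..}" for X
    using emeasure_\<nu> f_nonneg that sets_M by (simp add: measure_def)
  ultimately show ?thesis using that space_\<nu> sets_\<nu> by (simp add: M_def f_def)
qed

theorem mainTheorem6: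
  fixes P :: "complex set \<Rightarrow> nat \<Rightarrow> nat \<Rightarrow> complex"
  assumes "is_povm P"
    and "phase_covariant P"
    and "\<forall>\<Theta>. \<Theta> \<in> sets borel \<longrightarrow> \<Theta> \<subseteq> {0..<2*pi} \<longrightarrow>
           (\<forall>m n. P (polar_set {0..} \<Theta>) m n = E_can \<Theta> m n)"
  shows "\<exists>\<nu> :: real measure. prob_space \<nu> \<and> space \<nu> = {0..} \<and>
           sets \<nu> = sets (restrict_space borel {0..}) \<and>
           (\<forall>X. X \<in> sets borel \<longrightarrow> X \<subseteq> {0..} \<longrightarrow>
              (\<forall>m n. P (polar_set X {0..<2*pi}) m n =
                     (if m = n then complex_of_real (measure \<nu> X) else 0)))"
proof -
  have can: "canonical_angle_margin P"
    using assms(3) unfolding canonical_angle_margin_def .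
  obtain \<nu> where \<nu>: "prob_space \<nu>" "space \<nu> = {0..}" "sets \<nu> = sets (restrict_space borel {0..})"
    and measure_\<nu>: "\<And>X. X \<in> sets borel \<Longrightarrow> X \<subseteq> {0..} \<Longrightarrow> measure \<nu> X = Re (P (polar_set X {0..<2*pi}) 0 0)"
    using povm_radial_measure[OF assms(1)] by blast
  have "P (polar_set X {0..<2*pi}) m n = (if m = n then complex_of_real (measure \<nu> X) else 0)"
    if X: "X \<in> sets borel" "X \<subseteq> {0..}" for X m n
  proof (cases "m = n")
    case True
    then show ?thesis
      using povm_diag_eq[OF assms(1,2) can X, of m 0] measure_\<nu>[OF X]
        povm_diag_real_nonneg(1)[OF assms(1) polar_set_borel[OF X], of "{0..<2*pi}" 0]
      by simp
  qed (use phase_covariant_offdiag_zero[OF assms(2) X] in simp)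
  with \<nu> show ?thesis by blast
qed

end
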